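(* Suppose that there exist a cyclic HDM$(k,n;h)$, a cyclic DM$(n',k;1)$, and a cyclic DCA$(k,hn'+1;hn')$ satisfying P1 and P2. Then there exists a cyclic DCA$(k,nn'+1;nn')$ satisfying P1 and P2.
   Context: A difference matrix DM$(n,k;\lambda)$ over an abelian group $(G,+)$ of order $n$ is an $n\times k$ matrix $Q=[q(i,j)]$ with entries in $G$ such that for every pair of distinct columns $j,j'$ the multiset $\{q(i,j)-q(i,j') : 0\le i\le n-1\}$ contains every element of $G$ exactly $\lambda$ times. A holey difference matrix HDM$(k,n;h)$ over $G$ with hole a subgroup $H$ of order $h$ is an $(n-h)\times k$ matrix with entries in $G$ such that for every pair of distinct columns the multiset of row differences contains every element of $G\setminus H$ exactly once. A difference covering array DCA$(k,\eta;n)$ over $G$ is an $\eta\times k$ matrix with entries in $G$ such that for every pair of distinct columns $j,j'$ the multiset of row differences $q(i,j)-q(i,j')$ contains every element of $G$ at least once. Any of these is cyclic if $G=\mathbb{Z}_n$. A DCA$(k,n+1;n)$ is taken in normalized form: all entries of its last row (row $n$) and last column (column $k-1$) equal $0$. It satisfies P1 if $0$ occurs at least twice in every column, and P2 if for all distinct columns $j,j'$ with $j\neq k-1\neq j'$, the set $\{q(i,j)-q(i,j') : 0\le i\le n-1\}$ equals $G\setminus\{0\}$. *)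

theory Defs
  imports Main
begin

text \<open>Matrices over the cyclic group Z_m are functions Q :: nat => nat => int
  (row index, column index), whose entries (within the matrix range) lie in
  {0..<m}, the standard representatives of Z_m.\<close>

definition zdiff :: "nat \<Rightarrow> int \<Rightarrow> int \<Rightarrow> int" where
  "zdiff m a b = (a - b) mod int m"

definition entries_in :: "nat \<Rightarrow> nat \<Rightarrow> nat \<Rightarrow> (nat \<Rightarrow> nat \<Rightarrow> int) \<Rightarrow> bool" where
  "entries_in m rows k Q \<longleftrightarrow> (\<forall>i<rows. \<forall>j<k. Q i j \<in> {0..<int m})"

definition cyclic_DM :: "nat \<Rightarrow> nat \<Rightarrow> nat \<Rightarrow> (nat \<Rightarrow> nat \<Rightarrow> int) \<Rightarrow> bool" where
  "cyclic_DM m k lam Q \<longleftrightarrow> 0 < m \<and> entries_in m (lam * m) k Q \<and>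
     (\<forall>j<k. \<forall>j'<k. j \<noteq> j' \<longrightarrow>
        (\<forall>g\<in>{0..<int m}. card {i. i < lam * m \<and> zdiff m (Q i j) (Q i j') = g} = lam))"

definition hole :: "nat \<Rightarrow> nat \<Rightarrow> int set" where
  "hole m h = {g \<in> {0..<int m}. int (m div h) dvd g}"

definition cyclic_HDM :: "nat \<Rightarrow> nat \<Rightarrow> nat \<Rightarrow> (nat \<Rightarrow> nat \<Rightarrow> int) \<Rightarrow> bool" where
  "cyclic_HDM k m h Q \<longleftrightarrow> 0 < m \<and> 0 < h \<and> h dvd m \<and> entries_in m (m - h) k Q \<and>
     (\<forall>j<k. \<forall>j'<k. j \<noteq> j' \<longrightarrow>
        (\<forall>g\<in>{0..<int m} - hole m h.
            card {i. i < m - h \<and> zdiff m (Q i j) (Q i j') = g} = 1))"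

definition cyclic_DCA :: "nat \<Rightarrow> nat \<Rightarrow> nat \<Rightarrow> (nat \<Rightarrow> nat \<Rightarrow> int) \<Rightarrow> bool" where
  "cyclic_DCA k eta m Q \<longleftrightarrow> 0 < m \<and> entries_in m eta k Q \<and>
     (\<forall>j<k. \<forall>j'<k. j \<noteq> j' \<longrightarrow>
        (\<forall>g\<in>{0..<int m}. \<exists>i<eta. zdiff m (Q i j) (Q i j') = g))"

definition normalized_DCA :: "nat \<Rightarrow> nat \<Rightarrow> (nat \<Rightarrow> nat \<Rightarrow> int) \<Rightarrow> bool" where
  "normalized_DCA k m Q \<longleftrightarrow> (\<forall>j<k. Q m j = 0) \<and> (0 < k \<longrightarrow> (\<forall>i\<le>m. Q i (k - 1) = 0))"

definition DCA_P1 :: "nat \<Rightarrow> nat \<Rightarrow> (nat \<Rightarrow> nat \<Rightarrow> int) \<Rightarrow> bool" where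
  "DCA_P1 k m Q \<longleftrightarrow> (\<forall>j<k. 2 \<le> card {i. i \<le> m \<and> Q i j = 0})"

definition DCA_P2 :: "nat \<Rightarrow> nat \<Rightarrow> (nat \<Rightarrow> nat \<Rightarrow> int) \<Rightarrow> bool" where
  "DCA_P2 k m Q \<longleftrightarrow> (\<forall>j<k. \<forall>j'<k. j \<noteq> j' \<and> j \<noteq> k - 1 \<and> j' \<noteq> k - 1 \<longrightarrow>
       {zdiff m (Q i j) (Q i j') | i. i < m} = {0..<int m} - {0})"

definition cyclic_DCA_P12 :: "nat \<Rightarrow> nat \<Rightarrow> (nat \<Rightarrow> nat \<Rightarrow> int) \<Rightarrow> bool" where
  "cyclic_DCA_P12 k m Q \<longleftrightarrow> cyclic_DCA k (m + 1) m Q \<and> normalized_DCA k m Q \<and>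
     DCA_P1 k m Q \<and> DCA_P2 k m Q"

end

theory Submission
  imports Defs
begin

text \<open>Write \<open>n = h t\<close>, \<open>N = n n'\<close> and \<open>M = h n'\<close>, so \<open>N = t M\<close>.  The rows of the new array are
  the \<open>(n - h) n'\<close> rows \<open>a + n b\<close> of the product of the HDM \<open>A\<close> with the DM \<open>B\<close> (normalised
  by subtracting the last column), followed by the \<open>M + 1\<close> rows of \<open>t D\<close>.  A row difference of
  the product part is never a multiple of \<open>t\<close>, because the HDM differences avoid the hole
  \<open>t\<int>/n\<int>\<close>, and every non-multiple of \<open>t\<close> modulo \<open>N\<close> occurs: its residue modulo \<open>n\<close> lies
  outside the hole and is realised by \<open>A\<close>, and the DM \<open>B\<close> then fixes the quotient modulo \<open>n'\<close>.
  The multiples of \<open>t\<close> are exactly the differences of \<open>t D\<close>, which therefore carries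
  normalisation, P1 and P2 over from \<open>D\<close>.\<close>

lemma multiple_in_range:
  fixes g :: int
  assumes "0 < t" "g \<in> {0..<int t * int M}" "int t dvd g"
  obtains q where "g = int t * q" "q \<in> {0..<int M}"
proof -
  obtain q where q: "g = int t * q" using assms(3) by (elim dvdE)
  with assms have "0 \<le> q" "q < int M" by (auto simp: zero_le_mult_iff)
  then show thesis using that[OF q] by simp
qed

lemma hole_mult_eq:
  assumes "0 < h"
  shows "hole (h * t) h = {g \<in> {0..<int (h * t)}. int t dvd g}"
  using assms by (simp add: hole_def)

lemma card_hole:
  assumes "0 < h" "0 < t"
  shows "card (hole (h * t) h) = h"
proof -
  have "hole (h * t) h = (\<lambda>q. int t * q) ` {0..<int h}"
  proof (intro equalityI subsetI)
    fix g assume "g \<in> hole (h * t) h"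
    then have "g \<in> {0..<int t * int h}" "int t dvd g"
      using assms by (auto simp: hole_mult_eq mult.commute)
    then obtain q where "g = int t * q" "q \<in> {0..<int h}"
      using multiple_in_range[OF \<open>0 < t\<close>] by blast
    then show "g \<in> (\<lambda>q. int t * q) ` {0..<int h}" by blast
  next
    fix g assume "g \<in> (\<lambda>q. int t * q) ` {0..<int h}"
    then show "g \<in> hole (h * t) h"
      using assms by (auto simp: hole_mult_eq mult.commute)
  qed
  moreover have "inj_on (\<lambda>q. int t * q) {0..<int h}"
    using assms by (auto simp: inj_on_def)
  ultimately show ?thesis by (simp add: card_image)
qed

lemma zdiff_in_range: "0 < m \<Longrightarrow> zdiff m a b \<in> {0..<int m}"
  by (simp add: zdiff_def)

lemma zdiff_cancel_right: "zdiff m (zdiff m a c) (zdiff m b c) = zdiff m a b"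
  unfolding zdiff_def by (simp add: mod_diff_eq)

lemma zdiff_mult_mult: "zdiff (t * m) (int t * a) (int t * b) = int t * zdiff m a b"
  unfolding zdiff_def by (simp add: right_diff_distrib[symmetric] mod_mult_mult1)

lemma cyclic_HDM_diff_exists:
  assumes "cyclic_HDM k m h A" "j < k" "j' < k" "j \<noteq> j'" "g \<in> {0..<int m} - hole m h"
  obtains r where "r < m - h" "zdiff m (A r j) (A r j') = g"
proof -
  have "card {r. r < m - h \<and> zdiff m (A r j) (A r j') = g} = 1"
    using assms unfolding cyclic_HDM_def by blast
  then show thesis using that by (auto simp: card_1_singleton_iff)
qed

text \<open>The \<open>m - h\<close> rows already realise the \<open>m - h\<close> elements outside the hole once each, so
  no row is left over for a difference inside the hole.\<close>
lemma cyclic_HDM_diff_notin_hole: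
  assumes HDM: "cyclic_HDM k m h A" and "j < k" "j' < k" "j \<noteq> j'" and r: "r < m - h"
  shows "zdiff m (A r j) (A r j') \<notin> hole m h"
proof -
  define d where "d r = zdiff m (A r j) (A r j')" for r
  define G where "G = {0..<int m} - hole m h"
  have fibre: "card {r. r < m - h \<and> d r = g} = 1" if "g \<in> G" for g
    using assms that unfolding cyclic_HDM_def d_def G_def by blast
  have "0 < m" "0 < h" "h dvd m"
    using HDM unfolding cyclic_HDM_def by auto
  then obtain t where m: "m = h * t" and "0 < t"
    by (metis dvdE gr0I mult_0_right)
  moreover have "hole m h \<subseteq> {0..<int m}" by (auto simp: hole_def)
  ultimately have "card G = m - h"
    using \<open>0 < h\<close> unfolding G_def
    by (simp add: card_Diff_subset finite_subset card_hole flip: of_nat_mult)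
  have "{r. r < m - h \<and> d r \<in> G} = (\<Union>g\<in>G. {r. r < m - h \<and> d r = g})" by blast
  also have "card \<dots> = (\<Sum>g\<in>G. 1)"
    by (subst card_UN_disjoint) (auto simp: G_def fibre)
  finally have "card {r. r < m - h \<and> d r \<in> G} = card {..<m - h}"
    using \<open>card G = m - h\<close> by simp
  then have "{r. r < m - h \<and> d r \<in> G} = {..<m - h}"
    by (intro card_subset_eq) auto
  with r show ?thesis unfolding d_def G_def by blast
qed

lemma cyclic_DM_diff_exists:
  assumes "cyclic_DM m k 1 B" "j < k" "j' < k" "j \<noteq> j'" "g \<in> {0..<int m}"
  obtains s where "s < m" "zdiff m (B s j) (B s j') = g"
proof -
  have "card {s. s < 1 * m \<and> zdiff m (B s j) (B s j') = g} = 1"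
    using assms unfolding cyclic_DM_def by blast
  then show thesis using that by (auto simp: card_1_singleton_iff)
qed

locale DCA_product_construction =
  fixes k n h n' :: nat and A B D :: "nat \<Rightarrow> nat \<Rightarrow> int"
  assumes HDM: "cyclic_HDM k n h A"
    and DM: "cyclic_DM n' k 1 B"
    and DCA: "cyclic_DCA_P12 k (h * n') D"
begin

abbreviation "t \<equiv> n div h"
abbreviation "M \<equiv> h * n'"
abbreviation "N \<equiv> n * n'"
abbreviation "P \<equiv> (n - h) * n'"

definition product :: "nat \<Rightarrow> nat \<Rightarrow> int" where
  "product i j = A (i div n') j + int n * B (i mod n') j"

definition Q :: "nat \<Rightarrow> nat \<Rightarrow> int" where
  "Q i j = (if i < P then zdiff N (product i j) (product i (k - 1)) else int t * D (i - P) j)"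

lemma n_eq: "n = h * t" and t_pos: "0 < t" and n_pos: "0 < n" and n'_pos: "0 < n'"
    and h_le_n: "h \<le> n"
  using HDM DM unfolding cyclic_HDM_def cyclic_DM_def by (auto simp: dvd_imp_le)

lemma N_pos: "0 < N"
  using n_pos n'_pos by simp

lemma N_eq: "N = t * M"
  by (subst n_eq) simp

lemma int_N_eq: "int N = int t * int M"
  by (simp only: N_eq of_nat_mult)

lemma P_plus_M: "P + M = N"
  using h_le_n by (simp flip: add_mult_distrib)

lemma N_minus_P: "N - P = M"
  using P_plus_M by simp

lemma t_dvd_n: "int t dvd int n"
  by (subst (2) n_eq) simp

lemma Q_diff_product:
  "i < P \<Longrightarrow> zdiff N (Q i j) (Q i j') = zdiff N (product i j) (product i j')"
  by (simp add: Q_def zdiff_cancel_right)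

lemma Q_diff_scaled:
  "\<not> i < P \<Longrightarrow> zdiff N (Q i j) (Q i j') = int t * zdiff M (D (i - P) j) (D (i - P) j')"
  by (simp add: Q_def N_eq zdiff_mult_mult)

lemma product_diff:
  "product i j - product i j' =
     (A (i div n') j - A (i div n') j') + int n * (B (i mod n') j - B (i mod n') j')"
  by (simp add: product_def algebra_simps)

lemma product_diff_not_multiple:
  assumes j: "j < k" "j' < k" "j \<noteq> j'" and i: "i < P"
  shows "\<not> int t dvd zdiff N (product i j) (product i j')"
proof
  let ?r = "i div n'"
  assume "int t dvd zdiff N (product i j) (product i j')"
  then have "int t dvd product i j - product i j'"
    using t_dvd_n by (simp add: zdiff_def dvd_mod_iff)
  then have "int t dvd A ?r j - A ?r j'"
    using t_dvd_n by (simp add: product_diff dvd_add_left_iff)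
  then have "zdiff n (A ?r j) (A ?r j') \<in> hole n h"
    using t_dvd_n n_eq n_pos by (simp add: hole_def zdiff_def dvd_mod_iff)
  moreover have "?r < n - h"
    using i by (simp add: less_mult_imp_div_less)
  ultimately show False
    using cyclic_HDM_diff_notin_hole[OF HDM j] by blast
qed

lemma product_diff_covers:
  assumes j: "j < k" "j' < k" "j \<noteq> j'" and g: "g \<in> {0..<int N}" and "\<not> int t dvd g"
  obtains i where "i < P" "zdiff N (product i j) (product i j') = g"
proof -
  have "g mod int n \<in> {0..<int n} - hole n h"
    using assms t_dvd_n n_eq n_pos by (simp add: hole_def dvd_mod_iff)
  then obtain r where r: "r < n - h" "zdiff n (A r j) (A r j') = g mod int n"
    by (rule cyclic_HDM_diff_exists[OF HDM j])
  define e where "e = A r j - A r j'"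
  have "int n dvd g - e"
    using r(2) by (simp add: zdiff_def e_def mod_eq_dvd_iff dvd_diff_commute)
  then obtain q where q: "g - e = int n * q" by (elim dvdE)
  obtain s where s: "s < n'" "zdiff n' (B s j) (B s j') = q mod int n'"
    using cyclic_DM_diff_exists[OF DM j, of "q mod int n'"] n'_pos by auto
  define f where "f = B s j - B s j'"
  have "int n' dvd f - q"
    using s(2) by (simp add: zdiff_def f_def mod_eq_dvd_iff)
  then have "int N dvd int n * (f - q)" by simp
  define i where "i = r * n' + s"
  have i: "i div n' = r" "i mod n' = s"
    using s n'_pos by (auto simp: i_def)
  have "i < (r + 1) * n'" using s by (simp add: i_def)
  also have "\<dots> \<le> P" using r(1) by (intro mult_le_mono1) simp
  finally have "i < P" .
  moreover have "product i j - product i j' - g = int n * (f - q)"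
    using q by (simp add: product_diff i e_def f_def algebra_simps)
  with \<open>int N dvd int n * (f - q)\<close>
  have "zdiff N (product i j) (product i j') = g mod int N"
    unfolding zdiff_def by (simp only: mod_eq_dvd_iff)
  with g have "zdiff N (product i j) (product i j') = g" by simp
  ultimately show thesis using that by blast
qed

lemma Q_entries: "entries_in N (N + 1) k Q"
  unfolding entries_in_def
proof (intro allI impI)
  fix i j assume "i < N + 1" "j < k"
  show "Q i j \<in> {0..<int N}"
  proof (cases "i < P")
    case True
    show ?thesis
      unfolding Q_def if_P[OF True] by (rule zdiff_in_range[OF N_pos])
  next
    case False
    then have "D (i - P) j \<in> {0..<int M}"
      using DCA \<open>i < N + 1\<close> \<open>j < k\<close> P_plus_M
      unfolding cyclic_DCA_P12_def cyclic_DCA_def entries_in_def by auto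
    then have "int t * D (i - P) j \<in> {0..<int t * int M}"
      using t_pos by (auto intro: mult_strict_left_mono)
    then show ?thesis
      unfolding Q_def if_not_P[OF False] int_N_eq .
  qed
qed

lemma Q_normalized: "normalized_DCA k N Q"
  using DCA P_plus_M unfolding cyclic_DCA_P12_def normalized_DCA_def
  by (auto simp: Q_def zdiff_def N_minus_P)

lemma Q_P1: "DCA_P1 k N Q"
  unfolding DCA_P1_def
proof (intro allI impI)
  fix j assume "j < k"
  have "card {i. i \<le> M \<and> D i j = 0} = card ((\<lambda>i. P + i) ` {i. i \<le> M \<and> D i j = 0})"
    by (simp add: card_image)
  also have "\<dots> \<le> card {i. i \<le> N \<and> Q i j = 0}"
    by (rule card_mono) (use P_plus_M in \<open>auto simp: Q_def\<close>)
  moreover have "2 \<le> card {i. i \<le> M \<and> D i j = 0}"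
    using DCA \<open>j < k\<close> unfolding cyclic_DCA_P12_def DCA_P1_def by blast
  ultimately show "2 \<le> card {i. i \<le> N \<and> Q i j = 0}" by linarith
qed

lemma Q_covers:
  assumes j: "j < k" "j' < k" "j \<noteq> j'" and g: "g \<in> {0..<int N}"
  shows "\<exists>i<N + 1. zdiff N (Q i j) (Q i j') = g"
proof (cases "int t dvd g")
  case True
  moreover have "g \<in> {0..<int t * int M}" using g by (simp only: int_N_eq)
  ultimately obtain q where q: "g = int t * q" "q \<in> {0..<int M}"
    using multiple_in_range[OF t_pos] by blast
  then obtain i where "i < M + 1" "zdiff M (D i j) (D i j') = q"
    using DCA j unfolding cyclic_DCA_P12_def cyclic_DCA_def by blast
  then show ?thesis
    using q P_plus_M Q_diff_scaled[of "P + i"] by (intro exI[of _ "P + i"]) auto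
next
  case False
  then obtain i where "i < P" "zdiff N (product i j) (product i j') = g"
    using product_diff_covers[OF j g False] by blast
  then show ?thesis
    using P_plus_M Q_diff_product by (intro exI[of _ i]) auto
qed

lemma Q_P2: "DCA_P2 k N Q"
  unfolding DCA_P2_def
proof (intro allI impI)
  fix j j' assume "j < k" "j' < k" and jj: "j \<noteq> j' \<and> j \<noteq> k - 1 \<and> j' \<noteq> k - 1"
  then have j: "j < k" "j' < k" "j \<noteq> j'" by auto
  have D_P2: "{zdiff M (D i j) (D i j') | i. i < M} = {0..<int M} - {0}"
    using DCA j jj unfolding cyclic_DCA_P12_def DCA_P2_def by blast
  show "{zdiff N (Q i j) (Q i j') | i. i < N} = {0..<int N} - {0}"
  proof (intro equalityI subsetI)
    fix x assume "x \<in> {zdiff N (Q i j) (Q i j') | i. i < N}"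
    then obtain i where i: "i < N" "x = zdiff N (Q i j) (Q i j')" by blast
    show "x \<in> {0..<int N} - {0}"
    proof (cases "i < P")
      case True
      then have x: "x = zdiff N (product i j) (product i j')"
        using i by (simp add: Q_diff_product)
      then have "x \<noteq> 0"
        using product_diff_not_multiple[OF j True] by auto
      moreover have "x \<in> {0..<int N}"
        unfolding x by (rule zdiff_in_range[OF N_pos])
      ultimately show ?thesis by blast
    next
      case False
      then have x: "x = int t * zdiff M (D (i - P) j) (D (i - P) j')"
        using i by (simp add: Q_diff_scaled)
      have "i - P < M" using i False P_plus_M by linarith
      then have "zdiff M (D (i - P) j) (D (i - P) j') \<in> {0..<int M} - {0}"
        unfolding D_P2[symmetric] by blast
      then have "x \<in> {0..<int t * int M} - {0}"
        unfolding x using t_pos by (auto intro: mult_strict_left_mono)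
      then show ?thesis by (simp only: int_N_eq)
    qed
  next
    fix g assume g: "g \<in> {0..<int N} - {0}"
    show "g \<in> {zdiff N (Q i j) (Q i j') | i. i < N}"
    proof (cases "int t dvd g")
      case True
      have "g \<in> {0..<int t * int M}" using g unfolding int_N_eq by blast
      then obtain q where q: "g = int t * q" "q \<in> {0..<int M}"
        using multiple_in_range[OF t_pos _ True] by blast
      with g have "q \<in> {zdiff M (D i j) (D i j') | i. i < M}"
        unfolding D_P2 by auto
      then obtain i where "i < M" "zdiff M (D i j) (D i j') = q" by blast
      then show ?thesis
        using q P_plus_M Q_diff_scaled[of "P + i"] by (intro CollectI exI[of _ "P + i"]) auto
    next
      case False
      then obtain i where "i < P" "zdiff N (product i j) (product i j') = g"
        using product_diff_covers[OF j _ False] g by blast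
      then show ?thesis
        using P_plus_M Q_diff_product by (intro CollectI exI[of _ i]) auto
    qed
  qed
qed

lemma Q_cyclic_DCA_P12: "cyclic_DCA_P12 k N Q"
  using Q_entries Q_normalized Q_P1 Q_P2 Q_covers N_pos
  unfolding cyclic_DCA_P12_def cyclic_DCA_def by auto

end

theorem mainTheorem7:
  fixes k n h n' :: nat
  assumes "\<exists>Q. cyclic_HDM k n h Q"
    and "\<exists>Q. cyclic_DM n' k 1 Q"
    and "\<exists>Q. cyclic_DCA_P12 k (h * n') Q"
  shows "\<exists>Q. cyclic_DCA_P12 k (n * n') Q"
proof -
  obtain A B D where "cyclic_HDM k n h A" "cyclic_DM n' k 1 B" "cyclic_DCA_P12 k (h * n') D"
    using assms by blast
  then interpret DCA_product_construction k n h n' A B D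
    by unfold_locales
  show ?thesis using Q_cyclic_DCA_P12 by blast
qed

end
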